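(* Let $f_1,\dots,f_T\in\mathcal F_X(\alpha,l,G)$. Online gradient descent (OGD) with stepsize $\gamma=1/l$ is defined by $$x_1=x_0,\qquad x_t=\Pi_X\big(x_{t-1}-\gamma\nabla f_{t-1}(x_{t-1})\big)\quad\text{for }2\le t\le T.$$ Its dynamic regret satisfies $\mathrm{Reg}(\mathrm{OGD},\mathcal L_T(L_T,\mathcal F_X(\alpha,l,G)))\le \delta L_T$, where $\delta=(\beta/l+1)\frac{G}{1-\kappa}$ and $\kappa=\sqrt{1-\alpha/l}$.
   Context: Setting: $X\subseteq\mathbb R^n$ is nonempty, compact and convex with diameter $D$. The parameter $\beta\ge0$, the initial point $x_0\in X$ and the horizon $T\ge1$ are fixed, and $\Pi_X$ is Euclidean projection onto $X$. Function class: for $0<\alpha\le l$ and $G>0$, $\mathcal F_X(\alpha,l,G)$ is the set of differentiable $f:\mathbb R^n\to\mathbb R$ that are $\alpha$-strongly convex and $l$-smooth on $\mathbb R^n$, meaning $$f(x)+\langle\nabla f(x),y-x\rangle+\tfrac\alpha2\|y-x\|^2\le f(y)\le f(x)+\langle\nabla f(x),y-x\rangle+\tfrac l2\|y-x\|^2,$$ and that satisfy $\|\nabla f\|\le G$ on $X$. Total cost: $C_1^T(x)=\sum_{t=1}^T(f_t(x_t)+\frac\beta2\|x_t-x_{t-1}\|^2)$. Path length: $\theta_t=\arg\min_X f_t$ and $\theta_0=x_0$. For $0\le L_T\le DT$, $\mathcal L_T(L_T,\mathcal F_X(\alpha,l,G))$ is the set of sequences $\{f_t\}_{t=1}^T\subseteq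 \mathcal F_X(\alpha,l,G)$ with $\sum_{t=1}^T\|\theta_t-\theta_{t-1}\|\le L_T$. Dynamic regret: $\mathrm{Reg}(\mathcal A,\mathcal L_T)=\sup_{\{f_t\}\in\mathcal L_T}\big(C_1^T(x^{\mathcal A})-\min_{x\in X^T}C_1^T(x)\big)$, where $x^{\mathcal A}$ is the output of the algorithm and $x^{\mathcal A}_0=x_0$. *)

theory Defs
  imports "HOL-Analysis.Analysis"
begin

definition grad :: "('a::real_inner \<Rightarrow> real) \<Rightarrow> 'a \<Rightarrow> 'a" where
  "grad f x = (THE g. GDERIV f x :> g)"

definition in_F :: "'a::euclidean_space set \<Rightarrow> real \<Rightarrow> real \<Rightarrow> real \<Rightarrow> ('a \<Rightarrow> real) \<Rightarrow> bool" where
  "in_F X \<alpha> l G f \<longleftrightarrow>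
     (\<forall>x. f differentiable (at x)) \<and>
     (\<forall>x y. f x + inner (grad f x) (y - x) + \<alpha> / 2 * (norm (y - x))\<^sup>2 \<le> f y) \<and>
     (\<forall>x y. f y \<le> f x + inner (grad f x) (y - x) + l / 2 * (norm (y - x))\<^sup>2) \<and>
     (\<forall>x\<in>X. norm (grad f x) \<le> G)"

text \<open>Minimiser of f over X (unique for strongly convex f on nonempty compact convex X).\<close>
definition argmin_on :: "'a set \<Rightarrow> ('a \<Rightarrow> real) \<Rightarrow> 'a" where
  "argmin_on X f = (SOME z. z \<in> X \<and> (\<forall>y\<in>X. f z \<le> f y))"

definition theta :: "'a set \<Rightarrow> 'a \<Rightarrow> (nat \<Rightarrow> 'a \<Rightarrow> real) \<Rightarrow> nat \<Rightarrow> 'a" where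
  "theta X x0 f t = (if t = 0 then x0 else argmin_on X (f t))"

definition path_length :: "'a::real_normed_vector set \<Rightarrow> 'a \<Rightarrow> (nat \<Rightarrow> 'a \<Rightarrow> real) \<Rightarrow> nat \<Rightarrow> real" where
  "path_length X x0 f T = (\<Sum>t=1..T. norm (theta X x0 f t - theta X x0 f (t - 1)))"

definition in_LT :: "'a::euclidean_space set \<Rightarrow> 'a \<Rightarrow> nat \<Rightarrow> real \<Rightarrow> real \<Rightarrow> real \<Rightarrow> real
                      \<Rightarrow> (nat \<Rightarrow> 'a \<Rightarrow> real) \<Rightarrow> bool" where
  "in_LT X x0 T L \<alpha> l G f \<longleftrightarrow>
     (\<forall>t\<in>{1..T}. in_F X \<alpha> l G (f t)) \<and> path_length X x0 f T \<le> L"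

text \<open>Total cost C_1^T(x); x 0 is the initial point.\<close>
definition cost :: "real \<Rightarrow> nat \<Rightarrow> (nat \<Rightarrow> 'a::real_normed_vector \<Rightarrow> real) \<Rightarrow> (nat \<Rightarrow> 'a) \<Rightarrow> real" where
  "cost \<beta> T f x = (\<Sum>t=1..T. f t (x t) + \<beta> / 2 * (norm (x t - x (t - 1)))\<^sup>2)"

fun ogd :: "'a::euclidean_space set \<Rightarrow> real \<Rightarrow> (nat \<Rightarrow> 'a \<Rightarrow> real) \<Rightarrow> 'a \<Rightarrow> nat \<Rightarrow> 'a" where
  "ogd X \<gamma> f x0 0 = x0"
| "ogd X \<gamma> f x0 (Suc 0) = x0"
| "ogd X \<gamma> f x0 (Suc (Suc n)) =
     closest_point X (ogd X \<gamma> f x0 (Suc n) - \<gamma> *\<^sub>R grad (f (Suc n)) (ogd X \<gamma> f x0 (Suc n)))"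

definition dyn_regret :: "'a set \<Rightarrow> 'a \<Rightarrow> real \<Rightarrow> nat \<Rightarrow> (nat \<Rightarrow> 'a::real_normed_vector \<Rightarrow> real)
                           \<Rightarrow> (nat \<Rightarrow> 'a) \<Rightarrow> real" where
  "dyn_regret X x0 \<beta> T f x =
     cost \<beta> T f x - (INF y\<in>{y. y 0 = x0 \<and> (\<forall>t\<in>{1..T}. y t \<in> X)}. cost \<beta> T f y)"

end

theory Submission
  imports Defs
begin

text \<open>A projected gradient step with stepsize 1/l moves the iterate towards the minimiser
  \<theta>_t of f_t by the factor \<kappa> = sqrt(1 - \<alpha>/l), so the tracking error e_t = |x_t - \<theta>_t| obeys
  e_{t+1} \<le> \<kappa> e_t + |\<theta>_{t+1} - \<theta>_t| and summing gives \<Sum> e_t \<le> L_T / (1 - \<kappa>).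
  By convexity and the gradient bound, f_t(x_t) \<le> f_t(\<theta>_t) + G e_t; each step has length at most
  G/l and at most 2 e_t, so the switching cost \<beta>/2 |x_{t+1} - x_t|^2 is at most (\<beta>/l) G e_t.
  Any comparator pays at least \<Sum> f_t(\<theta>_t), and the regret is at most (\<beta>/l + 1) G \<Sum> e_t.\<close>

lemma projected_gradient_step_contracts:
  fixes f :: "'a::euclidean_space \<Rightarrow> real"
  assumes "closed X" "convex X" "th \<in> X" "\<forall>y\<in>X. f th \<le> f y" "l > 0"
    and strongly_convex: "\<forall>x y. f x + inner (grad f x) (y - x) + \<alpha> / 2 * (norm (y - x))\<^sup>2 \<le> f y"
    and smooth: "\<forall>x y. f y \<le> f x + inner (grad f x) (y - x) + l / 2 * (norm (y - x))\<^sup>2"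
  shows "(norm (closest_point X (x - (1/l) *\<^sub>R grad f x) - th))\<^sup>2 \<le> (1 - \<alpha>/l) * (norm (x - th))\<^sup>2"
proof -
  define g where "g = grad f x"
  define p where "p = closest_point X (x - (1/l) *\<^sub>R g)"
  have "p \<in> X" unfolding p_def using closest_point_in_set assms(1,3) by blast
  have "inner ((x - (1/l) *\<^sub>R g) - p) (th - p) \<le> 0"
    unfolding p_def by (rule closest_point_dot[OF assms(2,1,3)])
  moreover have "inner ((x - (1/l) *\<^sub>R g) - p) (th - p) = inner (x - p) (th - p) - inner g (th - p) / l"
    by (simp add: inner_diff_left)
  ultimately have "l * (inner (x - p) (th - p) - inner g (th - p) / l) \<le> 0"
    using \<open>l > 0\<close> by (simp add: mult_nonneg_nonpos)
  then have proj: "l * inner (x - p) (th - p) \<le> inner g (th - p)"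
    using \<open>l > 0\<close> by (simp add: right_diff_distrib)
  have descent: "inner g (th - p) + \<alpha>/2 * (norm (x - th))\<^sup>2 \<le> l/2 * (norm (x - p))\<^sup>2"
  proof -
    have "f x + inner g (th - x) + \<alpha>/2 * (norm (th - x))\<^sup>2 \<le> f th"
      using strongly_convex unfolding g_def by blast
    moreover have "f p \<le> f x + inner g (p - x) + l/2 * (norm (p - x))\<^sup>2"
      using smooth unfolding g_def by blast
    moreover have "f th \<le> f p" using assms(4) \<open>p \<in> X\<close> by blast
    moreover have "inner g (th - p) = inner g (th - x) - inner g (p - x)"
      by (simp add: inner_diff_right)
    ultimately show ?thesis by (simp add: norm_minus_commute)
  qed
  have pythagoras: "(norm (p - th))\<^sup>2 = (norm (x - th))\<^sup>2 - (norm (x - p))\<^sup>2 + 2 * inner (x - p) (th - p)"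
    using dot_norm_neg[of "x - p" "th - p"] by (simp add: norm_minus_commute)
  have "l * (norm (p - th))\<^sup>2 = l * (norm (x - th))\<^sup>2 - l * (norm (x - p))\<^sup>2 + 2 * (l * inner (x - p) (th - p))"
    unfolding pythagoras by (simp add: algebra_simps)
  also have "\<dots> \<le> l * (norm (x - th))\<^sup>2 - \<alpha> * (norm (x - th))\<^sup>2"
    using proj descent by linarith
  also have "\<dots> = l * ((1 - \<alpha>/l) * (norm (x - th))\<^sup>2)"
    using \<open>l > 0\<close> by (simp add: algebra_simps)
  finally show ?thesis using \<open>l > 0\<close> unfolding p_def g_def by simp
qed

lemma argmin_on_minimises:
  assumes "compact X" "X \<noteq> {}" "continuous_on X f"
  shows "argmin_on X f \<in> X \<and> (\<forall>y\<in>X. f (argmin_on X f) \<le> f y)"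
proof -
  have "\<exists>z. z \<in> X \<and> (\<forall>y\<in>X. f z \<le> f y)"
    using continuous_attains_inf[OF assms] by blast
  then show ?thesis unfolding argmin_on_def by (rule someI_ex)
qed

lemma first_order_gap_le:
  fixes f :: "'a::real_inner \<Rightarrow> real"
  assumes "f x + inner (grad f x) (y - x) + \<alpha> / 2 * (norm (y - x))\<^sup>2 \<le> f y" "0 \<le> \<alpha>"
  shows "f x \<le> f y + norm (grad f x) * norm (x - y)"
proof -
  have "- inner (grad f x) (y - x) \<le> norm (grad f x) * norm (x - y)"
    using Cauchy_Schwarz_ineq2[of "grad f x" "y - x"] by (simp add: norm_minus_commute)
  moreover have "0 \<le> \<alpha> / 2 * (norm (y - x))\<^sup>2" using \<open>0 \<le> \<alpha>\<close> by simp
  ultimately show ?thesis using assms(1) by linarith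
qed

lemma closest_point_step_le:
  assumes "closed X" "convex X" "x \<in> X"
  shows "norm (closest_point X (x - v) - x) \<le> norm v"
proof -
  have "norm (closest_point X (x - v) - x) = dist (closest_point X (x - v)) (closest_point X x)"
    using closest_point_self[OF \<open>x \<in> X\<close>] by (simp add: dist_norm)
  also have "\<dots> \<le> dist (x - v) x"
    using closest_point_lipschitz assms by blast
  finally show ?thesis by (simp add: dist_norm)
qed

lemma sum_le_sum_plus_lagged:
  fixes a b c :: "nat \<Rightarrow> real"
  assumes "a 1 \<le> b 1" and "\<And>t. 1 \<le> t \<Longrightarrow> t < n \<Longrightarrow> a (Suc t) \<le> b (Suc t) + c t"
  shows "(\<Sum>t=1..n. a t) \<le> (\<Sum>t=1..n. b t) + (\<Sum>t\<in>{1..<n}. c t)"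
  using assms(2)
proof (induction n)
  case (Suc n)
  show ?case
  proof (cases "n = 0")
    case True
    then show ?thesis using assms(1) by simp
  next
    case False
    then have "a (Suc n) \<le> b (Suc n) + c n" using Suc.prems by simp
    moreover have "(\<Sum>t=1..n. a t) \<le> (\<Sum>t=1..n. b t) + (\<Sum>t\<in>{1..<n}. c t)"
      using Suc by simp
    ultimately show ?thesis using False by simp
  qed
qed simp

lemma sum_le_of_contracting_recurrence:
  fixes e d :: "nat \<Rightarrow> real"
  assumes "0 \<le> \<kappa>" "\<kappa> < 1" "\<And>t. 0 \<le> e t" "e 1 \<le> d 1"
    and "\<And>t. 1 \<le> t \<Longrightarrow> t < n \<Longrightarrow> e (Suc t) \<le> \<kappa> * e t + d (Suc t)"
  shows "(\<Sum>t=1..n. e t) \<le> (\<Sum>t=1..n. d t) / (1 - \<kappa>)"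
proof -
  have "(\<Sum>t=1..n. e t) \<le> (\<Sum>t=1..n. d t) + (\<Sum>t\<in>{1..<n}. \<kappa> * e t)"
    using assms(4,5) by (intro sum_le_sum_plus_lagged) (auto simp: add.commute)
  also have "(\<Sum>t\<in>{1..<n}. \<kappa> * e t) \<le> \<kappa> * (\<Sum>t=1..n. e t)"
    unfolding sum_distrib_left[symmetric]
    by (intro mult_left_mono sum_mono2) (auto simp: assms(1,3))
  finally have "(\<Sum>t=1..n. e t) * (1 - \<kappa>) \<le> (\<Sum>t=1..n. d t)"
    by (simp add: algebra_simps)
  then show ?thesis using \<open>\<kappa> < 1\<close> by (simp add: pos_le_divide_eq)
qed

locale ogd_tracking =
  fixes X :: "'a::euclidean_space set" and x0 :: 'a and \<alpha> l G :: real and T :: nat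
    and f :: "nat \<Rightarrow> 'a \<Rightarrow> real"
  assumes X_nonempty: "X \<noteq> {}" and X_compact: "compact X" and X_convex: "convex X"
    and x0_in_X: "x0 \<in> X" and \<alpha>_pos: "0 < \<alpha>" and \<alpha>_le_l: "\<alpha> \<le> l"
    and losses_in_F: "\<And>t. t \<in> {1..T} \<Longrightarrow> in_F X \<alpha> l G (f t)"
begin

abbreviation x :: "nat \<Rightarrow> 'a" where "x \<equiv> ogd X (1 / l) f x0"

abbreviation \<theta> :: "nat \<Rightarrow> 'a" where "\<theta> \<equiv> theta X x0 f"

abbreviation \<kappa> :: real where "\<kappa> \<equiv> sqrt (1 - \<alpha> / l)"

definition tracking_error :: "nat \<Rightarrow> real" where
  "tracking_error t = norm (x t - \<theta> t)"

lemma l_pos: "0 < l"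
  using \<alpha>_pos \<alpha>_le_l by linarith

lemma X_closed: "closed X"
  using X_compact by (rule compact_imp_closed)

lemma kappa_nonneg: "0 \<le> \<kappa>" and kappa_lt_1: "\<kappa> < 1"
  using \<alpha>_pos \<alpha>_le_l l_pos by auto

lemma kappa_sq: "\<kappa>\<^sup>2 = 1 - \<alpha> / l"
  using \<alpha>_le_l l_pos by (simp add: divide_le_eq_1)

lemma G_nonneg:
  assumes "1 \<le> T"
  shows "0 \<le> G"
  using losses_in_F[of 1] assms X_nonempty unfolding in_F_def
  by (meson atLeastAtMost_iff ex_in_conv norm_ge_zero order_refl order_trans)

lemma
  assumes "t \<in> {1..T}"
  shows loss_differentiable: "\<forall>y. f t differentiable (at y)"
    and loss_strongly_convex:
      "\<forall>y z. f t y + inner (grad (f t) y) (z - y) + \<alpha> / 2 * (norm (z - y))\<^sup>2 \<le> f t z"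
    and loss_smooth: "\<forall>y z. f t z \<le> f t y + inner (grad (f t) y) (z - y) + l / 2 * (norm (z - y))\<^sup>2"
    and loss_grad_bounded: "\<forall>y\<in>X. norm (grad (f t) y) \<le> G"
  using losses_in_F[OF assms] unfolding in_F_def by blast+

lemma theta_minimises:
  assumes "t \<in> {1..T}"
  shows "\<theta> t \<in> X \<and> (\<forall>y\<in>X. f t (\<theta> t) \<le> f t y)"
proof -
  have "continuous_on X (f t)"
    using loss_differentiable[OF assms]
    by (meson differentiable_at_imp_differentiable_on differentiable_imp_continuous_on)
  then show ?thesis
    using argmin_on_minimises[OF X_compact X_nonempty] assms by (simp add: theta_def)
qed

lemma ogd_in_X: "x t \<in> X"
proof (cases t)
  case (Suc n)
  then show ?thesis
    by (cases n) (auto simp: x0_in_X closest_point_in_set[OF X_closed X_nonempty])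
qed (simp add: x0_in_X)

lemma ogd_Suc:
  assumes "1 \<le> t"
  shows "x (Suc t) = closest_point X (x t - (1 / l) *\<^sub>R grad (f t) (x t))"
  using assms by (cases t) auto

lemma ogd_step_contracts:
  assumes "t \<in> {1..T}"
  shows "norm (x (Suc t) - \<theta> t) \<le> \<kappa> * tracking_error t"
proof -
  have "1 \<le> t" using assms by simp
  have "(norm (x (Suc t) - \<theta> t))\<^sup>2 \<le> (1 - \<alpha> / l) * (norm (x t - \<theta> t))\<^sup>2"
    unfolding ogd_Suc[OF \<open>1 \<le> t\<close>]
    using theta_minimises[OF assms]
    by (intro projected_gradient_step_contracts[OF X_closed X_convex _ _ l_pos
          loss_strongly_convex[OF assms] loss_smooth[OF assms]]) simp_all
  also have "\<dots> = (\<kappa> * tracking_error t)\<^sup>2"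
    by (simp only: tracking_error_def power_mult_distrib kappa_sq)
  finally show ?thesis
    unfolding tracking_error_def
    by (rule power2_le_imp_le) (intro mult_nonneg_nonneg kappa_nonneg norm_ge_zero)
qed

lemma ogd_step_le:
  assumes "t \<in> {1..T}"
  shows "norm (x (Suc t) - x t) \<le> G / l"
proof -
  have "1 \<le> t" using assms by simp
  have "norm (x (Suc t) - x t) \<le> norm ((1 / l) *\<^sub>R grad (f t) (x t))"
    unfolding ogd_Suc[OF \<open>1 \<le> t\<close>]
    by (rule closest_point_step_le[OF X_closed X_convex ogd_in_X])
  also have "\<dots> \<le> G / l"
    using loss_grad_bounded[OF assms] ogd_in_X[of t] l_pos by (simp add: divide_right_mono)
  finally show ?thesis .
qed

lemma sum_tracking_error_le:
  "(\<Sum>t=1..T. tracking_error t) \<le> path_length X x0 f T / (1 - \<kappa>)"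
  unfolding path_length_def
proof (rule sum_le_of_contracting_recurrence[OF kappa_nonneg kappa_lt_1])
  show "tracking_error 1 \<le> norm (\<theta> 1 - \<theta> (1 - 1))"
    by (simp add: tracking_error_def theta_def norm_minus_commute)
next
  fix t assume "1 \<le> t" "t < T"
  have "tracking_error (Suc t) \<le> norm (x (Suc t) - \<theta> t) + norm (\<theta> (Suc t) - \<theta> t)"
    unfolding tracking_error_def
    using norm_triangle_ineq[of "x (Suc t) - \<theta> t" "\<theta> t - \<theta> (Suc t)"]
    by (simp add: norm_minus_commute)
  also have "\<dots> \<le> \<kappa> * tracking_error t + norm (\<theta> (Suc t) - \<theta> (Suc t - 1))"
    using ogd_step_contracts[of t] \<open>1 \<le> t\<close> \<open>t < T\<close> by simp
  finally show "tracking_error (Suc t) \<le> \<kappa> * tracking_error t + norm (\<theta> (Suc t) - \<theta> (Suc t - 1))" .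
qed (simp add: tracking_error_def)

lemma hitting_cost_le:
  assumes "t \<in> {1..T}"
  shows "f t (x t) \<le> f t (\<theta> t) + G * tracking_error t"
proof -
  have "f t (x t) \<le> f t (\<theta> t) + norm (grad (f t) (x t)) * tracking_error t"
    unfolding tracking_error_def
    using loss_strongly_convex[OF assms] \<alpha>_pos by (intro first_order_gap_le) auto
  also have "\<dots> \<le> f t (\<theta> t) + G * tracking_error t"
    using loss_grad_bounded[OF assms] ogd_in_X[of t] unfolding tracking_error_def
    by (simp add: mult_right_mono)
  finally show ?thesis .
qed

lemma switching_cost_le:
  assumes "0 \<le> \<beta>" "t \<in> {1..T}"
  shows "\<beta> / 2 * (norm (x (Suc t) - x t))\<^sup>2 \<le> \<beta> / l * G * tracking_error t"
proof -
  define s where "s = norm (x (Suc t) - x t)"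
  have "s \<le> norm (x (Suc t) - \<theta> t) + tracking_error t"
    unfolding s_def tracking_error_def
    using norm_triangle_ineq[of "x (Suc t) - \<theta> t" "\<theta> t - x t"] by (simp add: norm_minus_commute)
  also have "\<dots> \<le> 2 * tracking_error t"
    using ogd_step_contracts[OF assms(2)] kappa_lt_1 mult_right_mono[of \<kappa> 1 "tracking_error t"]
    by (simp add: tracking_error_def)
  finally have "s * s \<le> G / l * (2 * tracking_error t)"
    using ogd_step_le[OF assms(2)] by (intro mult_mono) (simp_all add: s_def order_trans[OF norm_ge_zero])
  then have "\<beta> / 2 * s\<^sup>2 \<le> \<beta> / 2 * (G / l * (2 * tracking_error t))"
    unfolding power2_eq_square using \<open>0 \<le> \<beta>\<close> by (intro mult_left_mono) simp_all
  then show ?thesis by (simp add: s_def)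
qed

lemma cost_ogd_le:
  assumes "0 \<le> \<beta>" "1 \<le> T"
  shows "cost \<beta> T f x \<le> (\<Sum>t=1..T. f t (\<theta> t)) + (\<beta> / l + 1) * G * (\<Sum>t=1..T. tracking_error t)"
proof -
  have "cost \<beta> T f x \<le> (\<Sum>t=1..T. f t (\<theta> t) + G * tracking_error t)
                         + (\<Sum>t\<in>{1..<T}. \<beta> / l * G * tracking_error t)"
    unfolding cost_def
  proof (rule sum_le_sum_plus_lagged)
    show "f 1 (x 1) + \<beta> / 2 * (norm (x 1 - x (1 - 1)))\<^sup>2 \<le> f 1 (\<theta> 1) + G * tracking_error 1"
      using hitting_cost_le[of 1] \<open>1 \<le> T\<close> by simp
  next
    fix t assume "1 \<le> t" "t < T"
    then have "t \<in> {1..T}" "Suc t \<in> {1..T}" by auto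
    then show "f (Suc t) (x (Suc t)) + \<beta> / 2 * (norm (x (Suc t) - x (Suc t - 1)))\<^sup>2
        \<le> f (Suc t) (\<theta> (Suc t)) + G * tracking_error (Suc t) + \<beta> / l * G * tracking_error t"
      using hitting_cost_le switching_cost_le[OF \<open>0 \<le> \<beta>\<close>] by (smt (verit) diff_Suc_1)
  qed
  also have "(\<Sum>t\<in>{1..<T}. \<beta> / l * G * tracking_error t) \<le> \<beta> / l * G * (\<Sum>t=1..T. tracking_error t)"
    using \<open>0 \<le> \<beta>\<close> G_nonneg[OF \<open>1 \<le> T\<close>] l_pos unfolding sum_distrib_left[symmetric]
    by (intro mult_left_mono sum_mono2) (auto simp: tracking_error_def)
  finally show ?thesis by (simp add: sum.distrib sum_distrib_left algebra_simps)
qed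

lemma comparator_cost_ge:
  assumes "0 \<le> \<beta>"
  shows "(\<Sum>t=1..T. f t (\<theta> t)) \<le> (INF y\<in>{y. y 0 = x0 \<and> (\<forall>t\<in>{1..T}. y t \<in> X)}. cost \<beta> T f y)"
proof (rule cINF_greatest)
  show "{y. y 0 = x0 \<and> (\<forall>t\<in>{1..T}. y t \<in> X)} \<noteq> {}"
    using x0_in_X by (auto intro!: exI[of _ "\<lambda>_. x0"])
next
  fix y assume y: "y \<in> {y. y 0 = x0 \<and> (\<forall>t\<in>{1..T}. y t \<in> X)}"
  show "(\<Sum>t=1..T. f t (\<theta> t)) \<le> cost \<beta> T f y"
    unfolding cost_def
  proof (rule sum_mono)
    fix t assume t: "t \<in> {1..T}"
    have "f t (\<theta> t) \<le> f t (y t)" using theta_minimises[OF t] y t by auto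
    moreover have "0 \<le> \<beta> / 2 * (norm (y t - y (t - 1)))\<^sup>2" using assms by simp
    ultimately show "f t (\<theta> t) \<le> f t (y t) + \<beta> / 2 * (norm (y t - y (t - 1)))\<^sup>2" by linarith
  qed
qed

lemma dyn_regret_ogd_le:
  assumes "0 \<le> \<beta>" "1 \<le> T"
  shows "dyn_regret X x0 \<beta> T f x \<le> (\<beta> / l + 1) * (G / (1 - \<kappa>)) * path_length X x0 f T"
proof -
  have "dyn_regret X x0 \<beta> T f x \<le> (\<beta> / l + 1) * G * (\<Sum>t=1..T. tracking_error t)"
    using cost_ogd_le[OF assms] comparator_cost_ge[OF assms(1)] unfolding dyn_regret_def by linarith
  also have "\<dots> \<le> (\<beta> / l + 1) * G * (path_length X x0 f T / (1 - \<kappa>))"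
    using sum_tracking_error_le assms G_nonneg l_pos by (intro mult_left_mono) auto
  finally show ?thesis by simp
qed

end

theorem theorem1:
  fixes X :: "'a::euclidean_space set" and x0 :: 'a
    and \<alpha> l G \<beta> L :: real and T :: nat
  assumes "X \<noteq> {}" and "compact X" and "convex X"
    and "x0 \<in> X"
    and "\<beta> \<ge> 0" and "T \<ge> 1"
    and "0 < \<alpha>" and "\<alpha> \<le> l" and "G > 0"
    and "0 \<le> L" and "L \<le> diameter X * real T"
  shows "\<forall>f. in_LT X x0 T L \<alpha> l G f \<longrightarrow>
           dyn_regret X x0 \<beta> T f (ogd X (1 / l) f x0)
             \<le> (\<beta> / l + 1) * (G / (1 - sqrt (1 - \<alpha> / l))) * L"
proof (intro allI impI)
  fix f assume "in_LT X x0 T L \<alpha> l G f"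
  then interpret ogd_tracking X x0 \<alpha> l G T f
    using assms by unfold_locales (auto simp: in_LT_def)
  have "0 \<le> (\<beta> / l + 1) * (G / (1 - \<kappa>))"
    using assms l_pos kappa_lt_1 by simp
  then show "dyn_regret X x0 \<beta> T f x \<le> (\<beta> / l + 1) * (G / (1 - \<kappa>)) * L"
    using dyn_regret_ogd_le[OF assms(5,6)] \<open>in_LT X x0 T L \<alpha> l G f\<close>
    by (meson in_LT_def mult_left_mono order_trans)
qed

end
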